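(* Under the setting of the context, define $c^{(m)}(i,y)=\sum_{u\in\mathcal V}q(i,y,u)\bigl[(v-g)(i,y+u/m)-(v-g)(i,y)\bigr]$ for $i\in E$, $y\in[0,1]^d$, and $$Z_{n+1}=R_{n+1}+v(\xi_{n+1},R_{n+1}/m)-\bigl[R_n+v(\xi_n,R_n/m)+(h-g)(\xi_n,R_n/m)+c^{(m)}(\xi_n,R_n/m)\bigr].$$ Then $\mathbb E(Z_{n+1}\mid\mathcal F_n)=0$ for all $n\ge0$, i.e. $R_{n+1}+v(\xi_{n+1},R_{n+1}/m)=R_n+v(\xi_n,R_n/m)+(h-g)(\xi_n,R_n/m)+c^{(m)}(\xi_n,R_n/m)+Z_{n+1}$ with $Z_{n+1}$ a martingale increment. Moreover there is a constant $C$, depending only on $E$, $P$ and $p$, such that $|c^{(m)}(i,y)|\le C/m$ for all $m\ge1$, $i\in E$, $y\in[0,1]^d$.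
   Context: Let $d\ge1$, $(e_1,\dots,e_d)$ the canonical basis, $\mathcal V=\{\pm e_1,\dots,\pm e_d\}$. Let $E$ be a finite set and $P$ an irreducible and aperiodic stochastic matrix on $E$ with unique invariant probability $\mu$. For $k\in E$, $y\in\mathbb R^d$, $p(k,y,\cdot)$ is a probability on $\mathcal V$, with $y\mapsto p(k,y,u)$ twice continuously differentiable with bounded derivatives. Let $g(k,y)=\sum_uu\,p(k,y,u)$, assumed to satisfy $\sum_k\mu(k)g(k,y)=0$ for all $y$, and $v(i,y)=\sum_{n\ge0}\sum_jP^n(i,j)g(j,y)$. Reflected kernel: for $k\in E$, $y\in[0,1]^d$, $\ell\le d$: if $0<y_\ell<1$, $q(k,y,\pm e_\ell)=p(k,y,\pm e_\ell)$; if $y_\ell=1$, $q(k,y,e_\ell)=0$, $q(k,y,-e_\ell)=p(k,y,e_\ell)+p(k,y,-e_\ell)$; if $y_\ell=0$, $q(k,y,-e_\ell)=0$, $q(k,y,e_\ell)=p(k,y,e_\ell)+p(k,y,-e_\ell)$; $h(k,y)=\sum_uu\,q(k,y,u)$. For $m\ge1$, $(\xi_n,R_n)_{n\ge0}$ is a Markov chain on $E\times\{0,\dots,m\}^d$ with $R_0=0$ and, with $\mathcal F_n=\sigma(\xi_0,\dots,\xi_n,R_0,\dots,R_n)$, $\mathbb P(\xi_{n+1}=k,R_{n+1}=R_n+u\mid\mathcal F_n)=P(\xi_n,k)q(\xi_n,R_n/m,u)$. *)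

theory Defs
  imports "HOL-Probability.Probability"
begin

fun matpow :: "('e::finite \<Rightarrow> 'e \<Rightarrow> real) \<Rightarrow> nat \<Rightarrow> 'e \<Rightarrow> 'e \<Rightarrow> real" where
  "matpow P 0 i j = (if i = j then 1 else 0)"
| "matpow P (Suc n) i j = (\<Sum>k\<in>UNIV. matpow P n i k * P k j)"

definition stochastic :: "('e::finite \<Rightarrow> 'e \<Rightarrow> real) \<Rightarrow> bool" where
  "stochastic P \<longleftrightarrow> (\<forall>i j. 0 \<le> P i j) \<and> (\<forall>i. (\<Sum>j\<in>UNIV. P i j) = 1)"

definition irreducible_mat :: "('e::finite \<Rightarrow> 'e \<Rightarrow> real) \<Rightarrow> bool" where
  "irreducible_mat P \<longleftrightarrow> (\<forall>i j. \<exists>n. matpow P n i j > 0)"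

definition aperiodic_mat :: "('e::finite \<Rightarrow> 'e \<Rightarrow> real) \<Rightarrow> bool" where
  "aperiodic_mat P \<longleftrightarrow> (\<forall>i. Gcd {n::nat. n > 0 \<and> matpow P n i i > 0} = 1)"

definition invariant_prob :: "('e::finite \<Rightarrow> 'e \<Rightarrow> real) \<Rightarrow> ('e \<Rightarrow> real) \<Rightarrow> bool" where
  "invariant_prob P \<mu> \<longleftrightarrow> (\<forall>i. 0 \<le> \<mu> i) \<and> (\<Sum>i\<in>UNIV. \<mu> i) = 1
      \<and> (\<forall>j. (\<Sum>i\<in>UNIV. \<mu> i * P i j) = \<mu> j)"

definition Vset :: "(real^'d) set" where
  "Vset = {axis l 1 | l. True} \<union> {- axis l 1 | l. True}"

definition unit_box :: "(real^'d) set" where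
  "unit_box = {y. \<forall>l. 0 \<le> y $ l \<and> y $ l \<le> 1}"

definition C2_bounded :: "(real^'d \<Rightarrow> real) \<Rightarrow> bool" where
  "C2_bounded f \<longleftrightarrow> (\<exists>G H. (\<forall>y. (f has_derivative (\<lambda>z. G y \<bullet> z)) (at y))
      \<and> (\<forall>y. (G has_derivative (\<lambda>z. H y *v z)) (at y))
      \<and> continuous_on UNIV H \<and> bounded (range G) \<and> bounded (range H))"

definition gdrift :: "('e \<Rightarrow> real^'d \<Rightarrow> real^'d \<Rightarrow> real) \<Rightarrow> 'e \<Rightarrow> real^'d \<Rightarrow> real^'d" where
  "gdrift p k y = (\<Sum>u\<in>Vset. p k y u *\<^sub>R u)"

definition vfun :: "('e::finite \<Rightarrow> 'e \<Rightarrow> real) \<Rightarrow> ('e \<Rightarrow> real^'d \<Rightarrow> real^'d \<Rightarrow> real)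
    \<Rightarrow> 'e \<Rightarrow> real^'d \<Rightarrow> real^'d" where
  "vfun P p i y = (\<Sum>n. \<Sum>j\<in>UNIV. matpow P n i j *\<^sub>R gdrift p j y)"

text \<open>Reflected kernel. For \<open>u = e_l\<close> / \<open>u = -e_l\<close> exactly one summand is active;
  for \<open>u \<notin> V\<close> the value is 0.\<close>
definition qref :: "('e \<Rightarrow> real^'d \<Rightarrow> real^'d \<Rightarrow> real) \<Rightarrow> 'e \<Rightarrow> real^'d \<Rightarrow> real^'d \<Rightarrow> real" where
  "qref p k y u = (\<Sum>l\<in>UNIV.
     (if u = axis l 1 then
        (if y $ l = 1 then 0
         else if y $ l = 0 then p k y (axis l 1) + p k y (- axis l 1)
         else p k y (axis l 1))
      else if u = - axis l 1 then
        (if y $ l = 0 then 0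
         else if y $ l = 1 then p k y (axis l 1) + p k y (- axis l 1)
         else p k y (- axis l 1))
      else 0))"

definition hdrift :: "('e \<Rightarrow> real^'d \<Rightarrow> real^'d \<Rightarrow> real) \<Rightarrow> 'e \<Rightarrow> real^'d \<Rightarrow> real^'d" where
  "hdrift p k y = (\<Sum>u\<in>Vset. qref p k y u *\<^sub>R u)"

definition cm :: "('e::finite \<Rightarrow> 'e \<Rightarrow> real) \<Rightarrow> ('e \<Rightarrow> real^'d \<Rightarrow> real^'d \<Rightarrow> real)
    \<Rightarrow> nat \<Rightarrow> 'e \<Rightarrow> real^'d \<Rightarrow> real^'d" where
  "cm P p m i y = (\<Sum>u\<in>Vset. qref p i y u *\<^sub>R
      ((vfun P p i (y + (1 / real m) *\<^sub>R u) - gdrift p i (y + (1 / real m) *\<^sub>R u))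
       - (vfun P p i y - gdrift p i y)))"

definition natfilt :: "'a measure \<Rightarrow> (nat \<Rightarrow> 'a \<Rightarrow> 'e) \<Rightarrow> (nat \<Rightarrow> 'a \<Rightarrow> real^'d) \<Rightarrow> nat \<Rightarrow> 'a measure" where
  "natfilt M \<xi> R n = sigma (space M)
     ((\<Union>i\<in>{..n}. {\<xi> i -` A \<inter> space M | A. True}) \<union> (\<Union>i\<in>{..n}. {R i -` A \<inter> space M | A. True}))"

definition reflected_chain :: "('e::finite \<Rightarrow> 'e \<Rightarrow> real) \<Rightarrow> ('e \<Rightarrow> real^'d \<Rightarrow> real^'d \<Rightarrow> real)
    \<Rightarrow> nat \<Rightarrow> 'a measure \<Rightarrow> (nat \<Rightarrow> 'a \<Rightarrow> 'e) \<Rightarrow> (nat \<Rightarrow> 'a \<Rightarrow> real^'d) \<Rightarrow> bool" where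
  "reflected_chain P p m M \<xi> R \<longleftrightarrow>
     prob_space M
   \<and> (\<forall>n. \<xi> n \<in> M \<rightarrow>\<^sub>M count_space UNIV)
   \<and> (\<forall>n. R n \<in> M \<rightarrow>\<^sub>M count_space UNIV)
   \<and> (\<forall>\<omega>\<in>space M. R 0 \<omega> = 0)
   \<and> (\<forall>n k u. u \<in> Vset \<longrightarrow>
        (AE \<omega> in M. real_cond_exp M (natfilt M \<xi> R n)
            (indicator {\<omega>\<in>space M. \<xi> (Suc n) \<omega> = k \<and> R (Suc n) \<omega> = R n \<omega> + u}) \<omega>
          = P (\<xi> n \<omega>) k * qref p (\<xi> n \<omega>) ((1 / real m) *\<^sub>R R n \<omega>) u))"

text \<open>\<open>Z_{n+1}\<close> as a function of \<open>(\<xi>_n,R_n,\<xi>_{n+1},R_{n+1})\<close>.\<close>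
definition Zinc :: "('e::finite \<Rightarrow> 'e \<Rightarrow> real) \<Rightarrow> ('e \<Rightarrow> real^'d \<Rightarrow> real^'d \<Rightarrow> real)
    \<Rightarrow> nat \<Rightarrow> 'e \<Rightarrow> real^'d \<Rightarrow> 'e \<Rightarrow> real^'d \<Rightarrow> real^'d" where
  "Zinc P p m x r x' r' =
     r' + vfun P p x' ((1 / real m) *\<^sub>R r')
     - (r + vfun P p x ((1 / real m) *\<^sub>R r)
          + (hdrift p x ((1 / real m) *\<^sub>R r) - gdrift p x ((1 / real m) *\<^sub>R r))
          + cm P p m x ((1 / real m) *\<^sub>R r))"

end

theory Submission
  imports Defs
begin

text \<open>The corrector \<open>v = \<Sum>\<^sub>n P\<^sup>n g\<close> solves the Poisson equation \<open>P v = v - g\<close> of the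
  environment chain. Its series converges geometrically, uniformly in \<open>y\<close> and together with
  the Lipschitz constants, because \<open>g\<close> is \<open>\<mu>\<close>-centred and, by Doeblin's argument, \<open>P\<^sup>n\<close>
  converges to \<open>\<mu>\<close> geometrically fast for an irreducible aperiodic chain. Hence \<open>v - g\<close> is
  Lipschitz, which gives \<open>|c\<^sup>(\<^sup>m\<^sup>)| \<le> C/m\<close>. Given \<open>F\<^sub>n\<close>, the next state is \<open>(k, R\<^sub>n + u)\<close> with
  probability \<open>P(\<xi>\<^sub>n, k) q(\<xi>\<^sub>n, R\<^sub>n/m, u)\<close>; averaging over \<open>k\<close> replaces \<open>v\<close> by \<open>P v = v - g\<close>,
  averaging over \<open>u\<close> produces \<open>h\<close> and \<open>c\<^sup>(\<^sup>m\<^sup>)\<close>, so \<open>Z\<^sub>n\<^sub>+\<^sub>1\<close> has conditional mean zero.\<close>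

lemma matpow_nonneg: "stochastic P \<Longrightarrow> 0 \<le> matpow P n i j"
  by (induction n arbitrary: j) (auto simp: stochastic_def intro!: sum_nonneg)

lemma matpow_row_sum: "stochastic P \<Longrightarrow> (\<Sum>j\<in>UNIV. matpow P n i j) = 1"
proof (induction n)
  case (Suc n)
  have "(\<Sum>j\<in>UNIV. matpow P (Suc n) i j) = (\<Sum>k\<in>UNIV. matpow P n i k * (\<Sum>j\<in>UNIV. P k j))"
    by (simp add: sum_distrib_left) (rule sum.swap)
  also have "\<dots> = 1" using Suc by (simp add: stochastic_def)
  finally show ?case .
qed simp

lemma matpow_le_one: "stochastic P \<Longrightarrow> matpow P n i j \<le> 1"
  using member_le_sum[of j UNIV "matpow P n i"] matpow_nonneg[of P n i] matpow_row_sum[of P n i]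
  by simp

lemma matpow_add: "matpow P (a + b) i j = (\<Sum>k\<in>UNIV. matpow P a i k * matpow P b k j)"
proof (induction b arbitrary: j)
  case 0
  have "(\<Sum>k\<in>UNIV. matpow P a i k * matpow P 0 k j) = (\<Sum>k\<in>UNIV. if k = j then matpow P a i k else 0)"
    by (intro sum.cong) auto
  then show ?case by simp
next
  case (Suc b)
  have "matpow P (a + Suc b) i j = (\<Sum>l\<in>UNIV. \<Sum>k\<in>UNIV. matpow P a i k * matpow P b k l * P l j)"
    by (simp add: Suc sum_distrib_right)
  also have "\<dots> = (\<Sum>k\<in>UNIV. matpow P a i k * matpow P (Suc b) k j)"
    by (subst sum.swap) (simp add: sum_distrib_left mult.assoc)
  finally show ?case .
qed

lemma matpow_1 [simp]: "matpow P 1 i j = P i j"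
proof -
  have "matpow P 1 i j = (\<Sum>k\<in>UNIV. if i = k then P k j else 0)"
    by (simp add: if_distrib[where f = "\<lambda>x. x * _"] cong: if_cong)
  then show ?thesis by simp
qed

lemma matpow_Suc_left: "matpow P (Suc n) i j = (\<Sum>k\<in>UNIV. P i k * matpow P n k j)"
proof -
  have "matpow P (1 + n) i j = (\<Sum>k\<in>UNIV. matpow P 1 i k * matpow P n k j)"
    by (rule matpow_add)
  then show ?thesis by (simp only: matpow_1 plus_1_eq_Suc)
qed

lemma matpow_add_ge:
  "stochastic P \<Longrightarrow> matpow P a i k * matpow P b k j \<le> matpow P (a + b) i j"
  unfolding matpow_add
  by (rule member_le_sum[where f = "\<lambda>k. matpow P a i k * matpow P b k j"]) (auto simp: matpow_nonneg)

lemma invariant_prob_matpow: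
  "invariant_prob P \<mu> \<Longrightarrow> (\<Sum>i\<in>UNIV. \<mu> i * matpow P n i j) = \<mu> j"
proof (induction n arbitrary: j)
  case 0
  have "(\<Sum>i\<in>UNIV. \<mu> i * matpow P 0 i j) = (\<Sum>i\<in>UNIV. if i = j then \<mu> i else 0)"
    by (intro sum.cong) auto
  then show ?case by simp
next
  case (Suc n)
  have "(\<Sum>i\<in>UNIV. \<mu> i * matpow P (Suc n) i j) = (\<Sum>k\<in>UNIV. (\<Sum>i\<in>UNIV. \<mu> i * matpow P n i k) * P k j)"
    by (simp add: sum_distrib_left sum_distrib_right mult.assoc) (rule sum.swap)
  also have "\<dots> = \<mu> j" using Suc by (simp add: invariant_prob_def)
  finally show ?case .
qed

section \<open>Eventual positivity of aperiodic chains\<close>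

lemma additive_set_progression:
  fixes S :: "nat set"
  assumes add: "\<And>a b. a \<in> S \<Longrightarrow> b \<in> S \<Longrightarrow> a + b \<in> S"
    and b: "b \<in> S" "b + d \<in> S" and "1 \<le> k" "j \<le> k"
  shows "k * b + j * d \<in> S"
  using assms(4,5)
proof (induction k arbitrary: j rule: dec_induct)
  case base
  then consider "j = 0" | "j = 1" by linarith
  then show ?case by cases (use b in auto)
next
  case (step k)
  show ?case
  proof (cases j)
    case 0
    have "k * b + b \<in> S" using step.IH[of 0] add[OF _ b(1)] by simp
    with 0 show ?thesis by (simp add: algebra_simps)
  next
    case (Suc j')
    with step.prems have "j' \<le> k" by simp
    from add[OF step.IH[OF this] b(2)] Suc show ?thesis by (simp add: algebra_simps)
  qed
qed

text \<open>The least positive gap \<open>d\<close> between two elements of \<open>S\<close> divides every element: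
  otherwise, for large \<open>k\<close>, the elements \<open>k b + q d\<close> and \<open>k b + x = k b + q d + r\<close>
  would have the smaller gap \<open>r = x mod d\<close>.\<close>
lemma additive_set_consecutive:
  fixes S :: "nat set"
  assumes add: "\<And>a b. a \<in> S \<Longrightarrow> b \<in> S \<Longrightarrow> a + b \<in> S"
    and pos: "\<And>a. a \<in> S \<Longrightarrow> 0 < a" and gcd: "Gcd S = 1"
  shows "\<exists>b. b \<in> S \<and> b + 1 \<in> S"
proof -
  define D where "D = {d::nat. 0 < d \<and> (\<exists>b. b \<in> S \<and> b + d \<in> S)}"
  obtain s where s: "s \<in> S" using gcd by fastforce
  have "s \<in> D" unfolding D_def using s pos[OF s] add[OF s s] by auto
  define d where "d = (LEAST d. d \<in> D)"
  have "d \<in> D" unfolding d_def by (rule LeastI) fact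
  then obtain b where b: "b \<in> S" "b + d \<in> S" and d_pos: "0 < d" unfolding D_def by auto
  have d_min: "\<And>e. e \<in> D \<Longrightarrow> d \<le> e" unfolding d_def by (rule Least_le)
  have "d dvd x" if x: "x \<in> S" for x
  proof (rule ccontr)
    assume "\<not> d dvd x"
    then have r: "0 < x mod d" "x mod d < d" using d_pos by (auto simp: dvd_eq_mod_eq_0)
    define k where "k = x + 1"
    have "k * b + (x div d) * d \<in> S"
      by (rule additive_set_progression[OF add b]) (auto simp: k_def intro: le_SucI div_le_dividend)
    moreover have "k * b + 0 * d \<in> S"
      by (rule additive_set_progression[OF add b]) (auto simp: k_def)
    from add[OF this x] have "k * b + (x div d) * d + x mod d \<in> S" by (simp add: algebra_simps)
    ultimately have "x mod d \<in> D" unfolding D_def using r by blast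
    with d_min r show False by fastforce
  qed
  then have "d = 1" using gcd Gcd_greatest[of S d] by simp
  with b show ?thesis by blast
qed

lemma additive_set_eventually:
  fixes S :: "nat set"
  assumes add: "\<And>a b. a \<in> S \<Longrightarrow> b \<in> S \<Longrightarrow> a + b \<in> S"
    and pos: "\<And>a. a \<in> S \<Longrightarrow> 0 < a" and gcd: "Gcd S = 1"
  shows "\<exists>N. \<forall>n\<ge>N. n \<in> S"
proof -
  obtain b where b: "b \<in> S" "b + 1 \<in> S" using additive_set_consecutive[OF add pos gcd] by blast
  have "n \<in> S" if n: "b * b \<le> n" for n
  proof -
    have "b \<le> n div b" using n pos[OF b(1)] by (metis div_le_mono nonzero_mult_div_cancel_right not_gr0)
    moreover have "n mod b < b" using pos[OF b(1)] by simp
    ultimately have "n div b * b + n mod b * 1 \<in> S"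
      by (intro additive_set_progression[OF add b]) auto
    then show ?thesis by simp
  qed
  then show ?thesis by blast
qed

lemma matpow_eventually_positive:
  fixes P :: "'e::finite \<Rightarrow> 'e \<Rightarrow> real"
  assumes stoch: "stochastic P" and irr: "irreducible_mat P" and aper: "aperiodic_mat P"
  shows "\<exists>N. \<forall>n\<ge>N. \<forall>i j. 0 < matpow P n i j"
proof -
  have "\<exists>N. \<forall>n\<ge>N. 0 < matpow P n i i" for i
  proof -
    define S where "S = {n::nat. n > 0 \<and> matpow P n i i > 0}"
    have "a + b \<in> S" if "a \<in> S" "b \<in> S" for a b
      using that matpow_add_ge[OF stoch, of a i i b i] unfolding S_def
      by (auto intro: mult_pos_pos order_less_le_trans)
    moreover have "Gcd S = 1" using aper unfolding aperiodic_mat_def S_def by auto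
    ultimately obtain N where "\<forall>n\<ge>N. n \<in> S" using additive_set_eventually[of S] S_def by blast
    then show ?thesis unfolding S_def by auto
  qed
  then obtain N where N: "\<And>i n. N i \<le> n \<Longrightarrow> 0 < matpow P n i i" by metis
  obtain t where t: "\<And>i j. 0 < matpow P (t i j) i j"
    using irr unfolding irreducible_mat_def by metis
  define N0 where "N0 = (\<Sum>i\<in>UNIV. N i) + (\<Sum>i\<in>UNIV. \<Sum>j\<in>UNIV. t i j)"
  have "0 < matpow P n i j" if n: "N0 \<le> n" for n i j
  proof -
    have "N i \<le> (\<Sum>i\<in>UNIV. N i)" by (rule member_le_sum) auto
    moreover have "t i j \<le> (\<Sum>i\<in>UNIV. \<Sum>j\<in>UNIV. t i j)"
      using member_le_sum[of j UNIV "t i"] member_le_sum[of i UNIV "\<lambda>i. \<Sum>j\<in>UNIV. t i j"] by simp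
    ultimately have "N i \<le> n - t i j" "n - t i j + t i j = n" using n unfolding N0_def by linarith+
    then show ?thesis
      using matpow_add_ge[OF stoch, of "n - t i j" i i "t i j" j] N t[of i j]
      by (metis mult_pos_pos order_less_le_trans)
  qed
  then show ?thesis by blast
qed

section \<open>Geometric ergodicity\<close>

text \<open>Doeblin's argument: the part \<open>\<delta>\<close> common to all rows cancels in the difference.\<close>
lemma doeblin_contraction:
  fixes A :: "'e::finite \<Rightarrow> 'e \<Rightarrow> real" and b :: "'e \<Rightarrow> real"
  assumes rows: "\<And>i. (\<Sum>k\<in>UNIV. A i k) = 1" and lb: "\<And>i k. \<delta> \<le> A i k"
    and osc: "\<And>k k'. \<bar>b k - b k'\<bar> \<le> D"
  shows "\<bar>(\<Sum>k\<in>UNIV. A i k * b k) - (\<Sum>k\<in>UNIV. A i' k * b k)\<bar> \<le> (1 - real CARD('e) * \<delta>) * D"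
proof -
  define c where "c = Min (range b)"
  have c_le: "c \<le> b k" for k unfolding c_def by (rule Min_le) auto
  have "c \<in> range b" unfolding c_def by (rule Min_in) auto
  then obtain k0 where k0: "c = b k0" by blast
  have below_c: "b k - c \<le> D" for k using osc[of k k0] k0 by simp
  have split: "(\<Sum>k\<in>UNIV. A i k * b k)
      = (\<Sum>k\<in>UNIV. (A i k - \<delta>) * (b k - c)) + (\<Sum>k\<in>UNIV. \<delta> * b k) + (1 - real CARD('e) * \<delta>) * c"
    for i
  proof -
    have "(\<Sum>k\<in>UNIV. (A i k - \<delta>) * (b k - c))
        = (\<Sum>k\<in>UNIV. A i k * b k) - (\<Sum>k\<in>UNIV. \<delta> * b k) - c * (\<Sum>k\<in>UNIV. A i k) + c * \<delta> * real CARD('e)"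
      by (simp add: algebra_simps sum.distrib sum_subtractf sum_distrib_left)
    then show ?thesis using rows[of i] by (simp add: algebra_simps)
  qed
  have bounds: "0 \<le> (\<Sum>k\<in>UNIV. (A i k - \<delta>) * (b k - c))"
    "(\<Sum>k\<in>UNIV. (A i k - \<delta>) * (b k - c)) \<le> (1 - real CARD('e) * \<delta>) * D" for i
  proof -
    show "0 \<le> (\<Sum>k\<in>UNIV. (A i k - \<delta>) * (b k - c))" using lb c_le by (intro sum_nonneg) auto
    have "(\<Sum>k\<in>UNIV. (A i k - \<delta>) * (b k - c)) \<le> (\<Sum>k\<in>UNIV. (A i k - \<delta>) * D)"
      using lb below_c by (intro sum_mono mult_left_mono) auto
    also have "\<dots> = (1 - real CARD('e) * \<delta>) * D"
      using rows[of i] by (simp add: sum_distrib_right[symmetric] sum_subtractf)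
    finally show "(\<Sum>k\<in>UNIV. (A i k - \<delta>) * (b k - c)) \<le> (1 - real CARD('e) * \<delta>) * D" .
  qed
  show ?thesis using split[of i] split[of i'] bounds[of i] bounds[of i'] by (simp add: abs_le_iff)
qed

lemma matpow_contraction:
  fixes P :: "'e::finite \<Rightarrow> 'e \<Rightarrow> real"
  assumes stoch: "stochastic P" and lb: "\<And>i j. \<delta> \<le> matpow P N i j"
  shows "\<bar>matpow P (q * N + r) i j - matpow P (q * N + r) i' j\<bar> \<le> (1 - real CARD('e) * \<delta>) ^ q"
proof (induction q arbitrary: i i')
  case 0
  show ?case
    using matpow_nonneg[OF stoch, of r _ j] matpow_le_one[OF stoch, of r _ j] by (simp add: abs_le_iff)
      (meson add_increasing2 diff_le_eq)
next
  case (Suc q)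
  have "Suc q * N + r = N + (q * N + r)" by simp
  then have "\<bar>matpow P (Suc q * N + r) i j - matpow P (Suc q * N + r) i' j\<bar>
      = \<bar>(\<Sum>k\<in>UNIV. matpow P N i k * matpow P (q * N + r) k j)
         - (\<Sum>k\<in>UNIV. matpow P N i' k * matpow P (q * N + r) k j)\<bar>"
    by (simp only: matpow_add[of P N "q * N + r"])
  also have "\<dots> \<le> (1 - real CARD('e) * \<delta>) * (1 - real CARD('e) * \<delta>) ^ q"
    by (rule doeblin_contraction[OF matpow_row_sum[OF stoch] lb Suc.IH])
  finally show ?case by simp
qed

lemma power_div_le_root_power:
  fixes \<rho> :: real
  assumes "0 < \<rho>" "\<rho> \<le> 1" "0 < N"
  shows "\<rho> ^ (n div N) \<le> (1 / \<rho>) * root N \<rho> ^ n"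
proof -
  have "\<rho> ^ (n div N) * \<rho> = root N \<rho> ^ (N * (n div N) + N)"
    using assms by (simp add: power_add power_mult)
  also have "\<dots> \<le> root N \<rho> ^ n"
  proof (rule power_decreasing)
    have "n = N * (n div N) + n mod N" by simp
    with \<open>0 < N\<close> show "n \<le> N * (n div N) + N" by (metis add_left_mono mod_less_divisor less_imp_le)
  qed (use assms in auto)
  finally show ?thesis using assms by (simp add: field_simps)
qed

lemma invariant_prob_dist_le:
  assumes inv: "invariant_prob P \<mu>" and osc: "\<And>i'. \<bar>matpow P n i j - matpow P n i' j\<bar> \<le> D"
  shows "\<bar>matpow P n i j - \<mu> j\<bar> \<le> D"
proof -
  have \<mu>_sum: "(\<Sum>k\<in>UNIV. \<mu> k) = 1" and \<mu>_nonneg: "\<And>k. 0 \<le> \<mu> k"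
    using inv unfolding invariant_prob_def by auto
  have "matpow P n i j - \<mu> j = (\<Sum>k\<in>UNIV. \<mu> k * (matpow P n i j - matpow P n k j))"
    using invariant_prob_matpow[OF inv, of n j] \<mu>_sum
    by (simp add: algebra_simps sum_subtractf sum_distrib_right[symmetric])
  also have "\<bar>\<dots>\<bar> \<le> (\<Sum>k\<in>UNIV. \<mu> k * D)"
    by (rule order_trans[OF sum_abs sum_mono]) (auto simp: abs_mult \<mu>_nonneg osc intro: mult_left_mono)
  also have "\<dots> = D" using \<mu>_sum by (simp add: sum_distrib_right[symmetric])
  finally show ?thesis .
qed

lemma matpow_geometric_convergence:
  fixes P :: "'e::finite \<Rightarrow> 'e \<Rightarrow> real"
  assumes stoch: "stochastic P" and irr: "irreducible_mat P" and aper: "aperiodic_mat P"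
    and inv: "invariant_prob P \<mu>"
  obtains C \<theta> where "0 \<le> C" "0 < \<theta>" "\<theta> < 1" "\<And>n i j. \<bar>matpow P n i j - \<mu> j\<bar> \<le> C * \<theta> ^ n"
proof -
  obtain N0 where N0: "\<And>n i j. N0 \<le> n \<Longrightarrow> 0 < matpow P n i j"
    using matpow_eventually_positive[OF stoch irr aper] by blast
  define N where "N = Suc N0"
  have pos: "0 < matpow P N i j" for i j unfolding N_def by (rule N0) simp
  define \<delta> where "\<delta> = Min (range (\<lambda>(i, j). matpow P N i j))"
  have \<delta>_le: "\<delta> \<le> matpow P N i j" for i j unfolding \<delta>_def by (rule Min_le) auto
  have "\<delta> \<in> range (\<lambda>(i, j). matpow P N i j)" unfolding \<delta>_def by (rule Min_in) auto
  then have \<delta>_pos: "0 < \<delta>" using pos by auto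
  define \<rho> where "\<rho> = max (1 - real CARD('e) * \<delta>) (1 / 2)"
  have \<rho>: "0 < \<rho>" "\<rho> < 1" unfolding \<rho>_def using \<delta>_pos by (auto simp: Suc_le_eq)
  have "\<bar>matpow P n i j - matpow P n i' j\<bar> \<le> \<rho> ^ (n div N)" for n i i' j
  proof -
    have "0 \<le> 1 - real CARD('e) * \<delta>"
      using matpow_row_sum[OF stoch, of N i] sum_mono[of UNIV "\<lambda>_. \<delta>" "matpow P N i"] \<delta>_le by simp
    then have "(1 - real CARD('e) * \<delta>) ^ (n div N) \<le> \<rho> ^ (n div N)"
      unfolding \<rho>_def by (intro power_mono) auto
    with matpow_contraction[OF stoch \<delta>_le, of "n div N" "n mod N" i j i'] show ?thesis by simp
  qed
  then have dist: "\<bar>matpow P n i j - \<mu> j\<bar> \<le> \<rho> ^ (n div N)" for n i j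
    by (rule invariant_prob_dist_le[OF inv])
  have "\<bar>matpow P n i j - \<mu> j\<bar> \<le> (1 / \<rho>) * root N \<rho> ^ n" for n i j
    using order_trans[OF dist power_div_le_root_power[of \<rho> N n]] \<rho> unfolding N_def by simp
  moreover have "0 < root N \<rho>" "root N \<rho> < 1" using \<rho> unfolding N_def by auto
  ultimately show thesis using \<rho> by (intro that[of "1 / \<rho>" "root N \<rho>"]) auto
qed

lemma Vset_eq: "Vset = range (\<lambda>l. axis l (1::real)) \<union> range (\<lambda>l. - axis l 1)"
  unfolding Vset_def by auto

lemma finite_Vset [simp]: "finite (Vset :: (real^'d) set)"
  unfolding Vset_eq by simp

lemma norm_Vset: "u \<in> Vset \<Longrightarrow> norm u = 1"
  unfolding Vset_eq by auto

lemma axis_neq_neg_axis: "axis l (1::real) \<noteq> - axis l' 1"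
proof
  assume "axis l (1::real) = - axis l' 1"
  then have "axis l (1::real) $ l = (- axis l' 1) $ l" by simp
  then show False by (simp add: axis_def split: if_splits)
qed

lemma sum_Vset:
  fixes f :: "real^'d \<Rightarrow> 'b::comm_monoid_add"
  shows "(\<Sum>u\<in>Vset. f u) = (\<Sum>l\<in>UNIV. f (axis l 1) + f (- axis l 1))"
proof -
  have inj: "inj (\<lambda>l. axis l (1::real) :: real^'d)" "inj (\<lambda>l. - axis l (1::real) :: real^'d)"
    by (auto intro!: injI simp: axis_eq_axis)
  have "range (\<lambda>l. axis l (1::real) :: real^'d) \<inter> range (\<lambda>l. - axis l 1) = {}"
    using axis_neq_neg_axis by auto
  then have "(\<Sum>u\<in>Vset. f u) = (\<Sum>u\<in>range (\<lambda>l. axis l (1::real)). f u) + (\<Sum>u\<in>range (\<lambda>l. - axis l 1). f u)"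
    unfolding Vset_eq by (intro sum.union_disjoint) auto
  then show ?thesis by (simp add: sum.reindex[OF inj(1)] sum.reindex[OF inj(2)] sum.distrib)
qed

lemma qref_axis:
  "qref p k y (axis l 1) = (if y $ l = 1 then 0
     else if y $ l = 0 then p k y (axis l 1) + p k y (- axis l 1) else p k y (axis l 1))"
  unfolding qref_def
  by (simp add: axis_eq_axis axis_neq_neg_axis cong: if_cong)

lemma qref_neg_axis:
  "qref p k y (- axis l 1) = (if y $ l = 0 then 0
     else if y $ l = 1 then p k y (axis l 1) + p k y (- axis l 1) else p k y (- axis l 1))"
  unfolding qref_def
  by (simp add: axis_eq_axis axis_neq_neg_axis[symmetric] cong: if_cong)

lemma qref_nonneg:
  assumes "\<And>u. u \<in> Vset \<Longrightarrow> 0 \<le> p k y u" and "u \<in> Vset"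
  shows "0 \<le> qref p k y u"
  using assms unfolding Vset_eq by (auto simp: qref_axis qref_neg_axis)

lemma qref_sum:
  "(\<Sum>u\<in>Vset. qref p k y u) = (\<Sum>u\<in>Vset. p k y u)"
  unfolding sum_Vset by (intro sum.cong) (auto simp: qref_axis qref_neg_axis)

lemma norm_sum_Vset_le_1:
  assumes "\<And>u. u \<in> Vset \<Longrightarrow> 0 \<le> w u" and "(\<Sum>u\<in>Vset. w u) = 1"
  shows "norm (\<Sum>u\<in>Vset. w u *\<^sub>R (u :: real^'d)) \<le> 1"
proof -
  have "norm (\<Sum>u\<in>Vset. w u *\<^sub>R u) \<le> (\<Sum>u\<in>Vset. norm (w u *\<^sub>R u))" by (rule norm_sum)
  also have "\<dots> = (\<Sum>u\<in>Vset. w u)" using assms(1) by (intro sum.cong) (auto simp: norm_Vset)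
  finally show ?thesis using assms(2) by simp
qed

lemma C2_bounded_lipschitz:
  fixes f :: "real^'d \<Rightarrow> real"
  assumes "C2_bounded f"
  obtains L where "0 \<le> L" "\<And>y y'. \<bar>f y - f y'\<bar> \<le> L * norm (y - y')"
proof -
  obtain G where f': "\<And>y. (f has_derivative (\<lambda>z. G y \<bullet> z)) (at y)" and "bounded (range G)"
    using assms unfolding C2_bounded_def by blast
  then obtain B where B: "\<And>y. norm (G y) \<le> B" unfolding bounded_iff by blast
  have "norm (f y - f y') \<le> B * norm (y - y')" for y y'
  proof (rule differentiable_bound[of UNIV f "\<lambda>y z. G y \<bullet> z"])
    show "onorm (\<lambda>z. G x \<bullet> z) \<le> B" for x
    proof (rule onorm_le)
      fix z
      have "norm (G x \<bullet> z) \<le> norm (G x) * norm z" using Cauchy_Schwarz_ineq2 by simp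
      also have "\<dots> \<le> B * norm z" using B by (simp add: mult_right_mono)
      finally show "norm (G x \<bullet> z) \<le> B * norm z" .
    qed
  qed (use f' in auto)
  with B[of 0] show thesis by (intro that[of B]) (auto intro: order_trans[OF norm_ge_zero])
qed

section \<open>The corrector \<open>v\<close> and the Poisson equation\<close>

locale modulated_walk =
  fixes P :: "'e::finite \<Rightarrow> 'e \<Rightarrow> real"
    and \<mu> :: "'e \<Rightarrow> real"
    and p :: "'e \<Rightarrow> real^'d \<Rightarrow> real^'d \<Rightarrow> real"
  assumes stoch: "stochastic P"
    and irr: "irreducible_mat P"
    and aper: "aperiodic_mat P"
    and inv: "invariant_prob P \<mu>"
    and p_nonneg: "\<And>k y u. u \<in> Vset \<Longrightarrow> 0 \<le> p k y u"
    and p_sum: "\<And>k y. (\<Sum>u\<in>Vset. p k y u) = 1"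
    and p_C2: "\<And>k u. u \<in> Vset \<Longrightarrow> C2_bounded (\<lambda>y. p k y u)"
    and centered: "\<And>y. (\<Sum>k\<in>UNIV. \<mu> k *\<^sub>R gdrift p k y) = 0"
begin

lemma P_row_sum: "(\<Sum>k\<in>UNIV. P i k) = 1"
  using stoch by (simp add: stochastic_def)

lemma qref_nonneg_Vset: "u \<in> Vset \<Longrightarrow> 0 \<le> qref p k y u"
  using p_nonneg by (rule qref_nonneg)

lemma qref_sum_eq_1: "(\<Sum>u\<in>Vset. qref p k y u) = 1"
  by (simp add: qref_sum p_sum)

lemma norm_gdrift_le_1: "norm (gdrift p k y) \<le> 1"
  unfolding gdrift_def by (rule norm_sum_Vset_le_1) (use p_nonneg p_sum in auto)

lemma norm_hdrift_le_1: "norm (hdrift p k y) \<le> 1"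
  unfolding hdrift_def by (rule norm_sum_Vset_le_1) (use qref_nonneg_Vset qref_sum_eq_1 in auto)

lemma gdrift_lipschitz:
  obtains L where "0 \<le> L" "\<And>k y y'. norm (gdrift p k y - gdrift p k y') \<le> L * norm (y - y')"
proof -
  have "\<forall>ku\<in>UNIV \<times> Vset. \<exists>L\<ge>0. \<forall>y y'. \<bar>p (fst ku) y (snd ku) - p (fst ku) y' (snd ku)\<bar> \<le> L * norm (y - y')"
    using C2_bounded_lipschitz[OF p_C2] by (metis SigmaE prod.sel)
  then obtain Lp where Lp: "\<And>k u. u \<in> Vset \<Longrightarrow> 0 \<le> Lp (k, u)"
    "\<And>k u y y'. u \<in> Vset \<Longrightarrow> \<bar>p k y u - p k y' u\<bar> \<le> Lp (k, u) * norm (y - y')"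
    by (metis (no_types, lifting) bchoice SigmaI UNIV_I fst_conv snd_conv)
  define L where "L = (\<Sum>ku\<in>UNIV \<times> Vset. Lp ku)"
  have "Lp (k, u) \<le> L" if "u \<in> Vset" for k u
    unfolding L_def using that Lp(1) by (intro member_le_sum) auto
  then have p_lip: "\<bar>p k y u - p k y' u\<bar> \<le> L * norm (y - y')" if "u \<in> Vset" for k u y y'
    using Lp[OF that] by (meson mult_right_mono norm_ge_zero order_trans that)
  have "norm (gdrift p k y - gdrift p k y') \<le> (real (card (Vset :: (real^'d) set)) * L) * norm (y - y')" for k y y'
  proof -
    have "norm (gdrift p k y - gdrift p k y') = norm (\<Sum>u\<in>Vset. (p k y u - p k y' u) *\<^sub>R u)"
      unfolding gdrift_def by (simp add: sum_subtractf scaleR_diff_left)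
    also have "\<dots> \<le> (\<Sum>u\<in>Vset. norm ((p k y u - p k y' u) *\<^sub>R u))" by (rule norm_sum)
    also have "\<dots> \<le> (\<Sum>u\<in>(Vset :: (real^'d) set). L * norm (y - y'))"
      by (intro sum_mono) (auto simp: norm_Vset p_lip)
    finally show ?thesis by simp
  qed
  moreover have "0 \<le> L" unfolding L_def using Lp(1) by (auto intro: sum_nonneg)
  ultimately show thesis by (intro that[of "real (card (Vset :: (real^'d) set)) * L"]) auto
qed

definition drift_after :: "nat \<Rightarrow> 'e \<Rightarrow> real^'d \<Rightarrow> real^'d" where
  "drift_after n i y = (\<Sum>j\<in>UNIV. matpow P n i j *\<^sub>R gdrift p j y)"

lemma drift_after_centered: "drift_after n i y = (\<Sum>j\<in>UNIV. (matpow P n i j - \<mu> j) *\<^sub>R gdrift p j y)"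
  unfolding drift_after_def by (simp add: scaleR_diff_left sum_subtractf centered)

lemma drift_after_0: "drift_after 0 i y = gdrift p i y"
  unfolding drift_after_def by (simp add: if_distrib[where f = "\<lambda>c. c *\<^sub>R _"] cong: if_cong)

lemma drift_after_Suc: "drift_after (Suc n) i y = (\<Sum>k\<in>UNIV. P i k *\<^sub>R drift_after n k y)"
proof -
  have "drift_after (Suc n) i y = (\<Sum>j\<in>UNIV. \<Sum>k\<in>UNIV. (P i k * matpow P n k j) *\<^sub>R gdrift p j y)"
    unfolding drift_after_def matpow_Suc_left by (simp add: scaleR_sum_left)
  also have "\<dots> = (\<Sum>k\<in>UNIV. P i k *\<^sub>R drift_after n k y)"
    unfolding drift_after_def by (subst sum.swap) (simp add: scaleR_sum_right)
  finally show ?thesis .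
qed

lemma drift_after_geometric:
  obtains K \<theta> where "0 \<le> K" "0 < \<theta>" "\<theta> < 1"
    "\<And>n i y. norm (drift_after n i y) \<le> K * \<theta> ^ n"
    "\<And>n i y y'. norm (drift_after n i y - drift_after n i y') \<le> K * \<theta> ^ n * norm (y - y')"
proof -
  obtain C \<theta> where C: "0 \<le> C" "0 < \<theta>" "\<theta> < 1" "\<And>n i j. \<bar>matpow P n i j - \<mu> j\<bar> \<le> C * \<theta> ^ n"
    using matpow_geometric_convergence[OF stoch irr aper inv] by blast
  obtain L where L: "0 \<le> L" "\<And>k y y'. norm (gdrift p k y - gdrift p k y') \<le> L * norm (y - y')"
    using gdrift_lipschitz by blast
  define K where "K = real CARD('e) * C * (1 + L)"
  have "norm (drift_after n i y) \<le> (\<Sum>j\<in>UNIV. norm ((matpow P n i j - \<mu> j) *\<^sub>R gdrift p j y))"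
    for n i y unfolding drift_after_centered by (rule norm_sum)
  also have "\<dots> n i y \<le> (\<Sum>j\<in>(UNIV::'e set). C * \<theta> ^ n * 1)" for n i y
    by (intro sum_mono) (use mult_mono[OF C(4) norm_gdrift_le_1] C in simp)
  also have "\<dots> n \<le> K * \<theta> ^ n" for n
    unfolding K_def using C L by (simp add: algebra_simps mult_left_mono)
  finally have bound: "norm (drift_after n i y) \<le> K * \<theta> ^ n" for n i y .
  have "norm (drift_after n i y - drift_after n i y')
      = norm (\<Sum>j\<in>UNIV. (matpow P n i j - \<mu> j) *\<^sub>R (gdrift p j y - gdrift p j y'))" for n i y y'
    unfolding drift_after_centered by (simp add: sum_subtractf scaleR_diff_right)
  also have "\<dots> n i y y' \<le> (\<Sum>j\<in>UNIV. norm ((matpow P n i j - \<mu> j) *\<^sub>R (gdrift p j y - gdrift p j y')))"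
    for n i y y' by (rule norm_sum)
  also have "\<dots> n i y y' \<le> (\<Sum>j\<in>(UNIV::'e set). C * \<theta> ^ n * (L * norm (y - y')))" for n i y y'
    by (intro sum_mono) (use mult_mono[OF C(4) L(2)] C in simp)
  also have "\<dots> n y y' \<le> K * \<theta> ^ n * norm (y - y')" for n y y'
    unfolding K_def using C L by (simp add: algebra_simps mult_left_mono mult_right_mono)
  finally have lip: "norm (drift_after n i y - drift_after n i y') \<le> K * \<theta> ^ n * norm (y - y')"
    for n i y y' .
  show thesis using C L by (intro that[of K \<theta>] bound lip) (auto simp: K_def)
qed

lemma vfun_sums: "(\<lambda>n. drift_after n i y) sums vfun P p i y"
proof -
  obtain K \<theta> where "0 < \<theta>" "\<theta> < 1" "\<And>n. norm (drift_after n i y) \<le> K * \<theta> ^ n"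
    using drift_after_geometric by metis
  then have "summable (\<lambda>n. drift_after n i y)"
    by (intro summable_comparison_test[OF _ summable_mult[OF summable_geometric]]) auto
  then show ?thesis unfolding vfun_def drift_after_def[symmetric] by (simp add: summable_sums)
qed

lemma vfun_bounded: obtains B where "\<And>i y. norm (vfun P p i y) \<le> B"
proof -
  obtain K \<theta> where K: "0 < \<theta>" "\<theta> < 1" "\<And>n i y. norm (drift_after n i y) \<le> K * \<theta> ^ n"
    using drift_after_geometric by metis
  have "norm (vfun P p i y) \<le> (\<Sum>n. K * \<theta> ^ n)" for i y
    unfolding sums_unique[OF vfun_sums] using K by (intro norm_suminf_le summable_mult summable_geometric) auto
  then show thesis by (rule that)
qed

lemma vfun_lipschitz:
  obtains L where "0 \<le> L" "\<And>i y y'. norm (vfun P p i y - vfun P p i y') \<le> L * norm (y - y')"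
proof -
  obtain K \<theta> where K: "0 \<le> K" "0 < \<theta>" "\<theta> < 1"
    "\<And>n i y y'. norm (drift_after n i y - drift_after n i y') \<le> K * \<theta> ^ n * norm (y - y')"
    using drift_after_geometric by metis
  have geom: "summable (\<lambda>n. K * \<theta> ^ n)" using K by (intro summable_mult summable_geometric) simp
  have "norm (vfun P p i y - vfun P p i y') \<le> (\<Sum>n. K * \<theta> ^ n) * norm (y - y')" for i y y'
  proof -
    have "vfun P p i y - vfun P p i y' = (\<Sum>n. drift_after n i y - drift_after n i y')"
      using sums_diff[OF vfun_sums vfun_sums] by (simp add: sums_iff)
    also have "norm \<dots> \<le> (\<Sum>n. K * \<theta> ^ n * norm (y - y'))"
      by (intro norm_suminf_le K(4) summable_mult2 geom)
    also have "\<dots> = (\<Sum>n. K * \<theta> ^ n) * norm (y - y')" by (rule suminf_mult2[symmetric, OF geom])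
    finally show ?thesis .
  qed
  moreover have "0 \<le> (\<Sum>n. K * \<theta> ^ n)" using K by (intro suminf_nonneg geom) simp
  ultimately show thesis by (rule that[rotated])
qed

text \<open>Shifting the series defining \<open>v\<close> by one step drops its first term \<open>g\<close>.\<close>
lemma poisson_equation: "(\<Sum>k\<in>UNIV. P i k *\<^sub>R vfun P p k y) = vfun P p i y - gdrift p i y"
proof -
  have "(\<lambda>n. \<Sum>k\<in>UNIV. P i k *\<^sub>R drift_after n k y) sums (\<Sum>k\<in>UNIV. P i k *\<^sub>R vfun P p k y)"
    by (intro sums_sum sums_scaleR_right vfun_sums)
  then have "(\<lambda>n. drift_after (Suc n) i y) sums (\<Sum>k\<in>UNIV. P i k *\<^sub>R vfun P p k y)"
    by (simp add: drift_after_Suc)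
  then have "(\<lambda>n. drift_after n i y) sums ((\<Sum>k\<in>UNIV. P i k *\<^sub>R vfun P p k y) + gdrift p i y)"
    using sums_Suc_iff[of "\<lambda>n. drift_after n i y"] by (simp add: drift_after_0)
  from sums_unique2[OF this vfun_sums] show ?thesis by (simp add: algebra_simps)
qed

lemma cm_bound: obtains C where "\<And>m i y. norm (cm P p m i y) \<le> C / real m"
proof -
  obtain Lv where Lv: "0 \<le> Lv" "\<And>i y y'. norm (vfun P p i y - vfun P p i y') \<le> Lv * norm (y - y')"
    using vfun_lipschitz by blast
  obtain Lg where Lg: "0 \<le> Lg" "\<And>k y y'. norm (gdrift p k y - gdrift p k y') \<le> Lg * norm (y - y')"
    using gdrift_lipschitz by blast
  define F where "F i y = vfun P p i y - gdrift p i y" for i y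
  have F_lip: "norm (F i y' - F i y) \<le> (Lv + Lg) * norm (y' - y)" for i y y'
    using norm_triangle_ineq4[of "vfun P p i y' - vfun P p i y" "gdrift p i y' - gdrift p i y"]
      Lv(2)[of i y' y] Lg(2)[of i y' y]
    unfolding F_def by (simp add: algebra_simps)
  have "norm (cm P p m i y) \<le> (Lv + Lg) / real m" for m i y
  proof -
    have "norm (cm P p m i y) \<le> (\<Sum>u\<in>Vset. norm (qref p i y u *\<^sub>R (F i (y + (1 / real m) *\<^sub>R u) - F i y)))"
      unfolding cm_def F_def by (rule norm_sum)
    also have "\<dots> \<le> (\<Sum>u\<in>Vset. qref p i y u * ((Lv + Lg) / real m))"
    proof (rule sum_mono)
      fix u :: "real^'d" assume u: "u \<in> Vset"
      have "norm (F i (y + (1 / real m) *\<^sub>R u) - F i y) \<le> (Lv + Lg) / real m"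
        using F_lip[of i "y + (1 / real m) *\<^sub>R u" y] norm_Vset[OF u] by simp
      from mult_left_mono[OF this qref_nonneg_Vset[OF u]] qref_nonneg_Vset[OF u]
      show "norm (qref p i y u *\<^sub>R (F i (y + (1 / real m) *\<^sub>R u) - F i y)) \<le> qref p i y u * ((Lv + Lg) / real m)"
        by simp
    qed
    also have "\<dots> = (\<Sum>u\<in>Vset. qref p i y u) * ((Lv + Lg) / real m)"
      by (rule sum_distrib_right[symmetric])
    also have "\<dots> = (Lv + Lg) / real m" by (simp add: qref_sum_eq_1)
    finally show ?thesis .
  qed
  then show thesis by (rule that)
qed

lemma Zinc_mean_zero:
  "(\<Sum>k\<in>UNIV. \<Sum>u\<in>Vset. (P x k * qref p x ((1 / real m) *\<^sub>R y) u) *\<^sub>R Zinc P p m x y k (y + u)) = 0"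
proof -
  define z where "z = (1 / real m) *\<^sub>R y"
  define a where "a = vfun P p x z + (hdrift p x z - gdrift p x z) + cm P p m x z"
  define G where "G w = vfun P p x w - gdrift p x w" for w
  have Zinc_eq: "Zinc P p m x y k (y + u) = u + vfun P p k (z + (1 / real m) *\<^sub>R u) - a" for k u
    unfolding Zinc_def a_def z_def by (simp add: scaleR_right_distrib algebra_simps)
  have mean_k: "(\<Sum>k\<in>UNIV. P x k *\<^sub>R (u + vfun P p k w - a)) = u + G w - a" for u w
  proof -
    have "(\<Sum>k\<in>UNIV. P x k *\<^sub>R (u + vfun P p k w - a))
        = (\<Sum>k\<in>UNIV. P x k) *\<^sub>R u + (\<Sum>k\<in>UNIV. P x k *\<^sub>R vfun P p k w) - (\<Sum>k\<in>UNIV. P x k) *\<^sub>R a"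
      by (simp add: scaleR_sum_left sum.distrib sum_subtractf algebra_simps)
    then show ?thesis by (simp add: P_row_sum poisson_equation G_def)
  qed
  have "cm P p m x z = (\<Sum>u\<in>Vset. qref p x z u *\<^sub>R G (z + (1 / real m) *\<^sub>R u))
      - (\<Sum>u\<in>Vset. qref p x z u) *\<^sub>R G z"
    unfolding cm_def G_def by (simp add: scaleR_sum_left sum_subtractf scaleR_diff_right)
  then have cm_eq: "cm P p m x z = (\<Sum>u\<in>Vset. qref p x z u *\<^sub>R G (z + (1 / real m) *\<^sub>R u)) - G z"
    by (simp add: qref_sum_eq_1)
  have "(\<Sum>k\<in>UNIV. \<Sum>u\<in>Vset. (P x k * qref p x z u) *\<^sub>R Zinc P p m x y k (y + u))
      = (\<Sum>u\<in>Vset. qref p x z u *\<^sub>R (\<Sum>k\<in>UNIV. P x k *\<^sub>R (u + vfun P p k (z + (1 / real m) *\<^sub>R u) - a)))"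
    by (subst sum.swap) (simp add: Zinc_eq scaleR_sum_right mult.commute)
  also have "\<dots> = (\<Sum>u\<in>Vset. qref p x z u *\<^sub>R (u + G (z + (1 / real m) *\<^sub>R u) - a))"
    by (simp only: mean_k)
  also have "\<dots> = hdrift p x z + (\<Sum>u\<in>Vset. qref p x z u *\<^sub>R G (z + (1 / real m) *\<^sub>R u))
      - (\<Sum>u\<in>Vset. qref p x z u) *\<^sub>R a"
    unfolding hdrift_def by (simp add: scaleR_sum_left sum.distrib sum_subtractf algebra_simps)
  also have "\<dots> = 0" by (simp add: qref_sum_eq_1 a_def cm_eq G_def)
  finally show ?thesis unfolding z_def .
qed

lemma Zinc_bounded: obtains B where "\<And>x y k u. u \<in> Vset \<Longrightarrow> norm (Zinc P p m x y k (y + u)) \<le> B"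
proof -
  obtain Bv where Bv: "\<And>i y. norm (vfun P p i y) \<le> Bv" using vfun_bounded by metis
  obtain C where C: "\<And>m i y. norm (cm P p m i y) \<le> C / real m" using cm_bound by metis
  have "norm (Zinc P p m x y k (y + u)) \<le> 1 + Bv + Bv + 1 + 1 + C / real m" if "u \<in> Vset" for x y k u
  proof -
    define z where "z = (1 / real m) *\<^sub>R y"
    have Zinc_eq: "Zinc P p m x y k (y + u) = u + vfun P p k (z + (1 / real m) *\<^sub>R u) - vfun P p x z
        - hdrift p x z + gdrift p x z - cm P p m x z"
      unfolding Zinc_def z_def by (simp add: scaleR_right_distrib algebra_simps)
    have "norm (Zinc P p m x y k (y + u)) \<le> norm u + norm (vfun P p k (z + (1 / real m) *\<^sub>R u))
        + norm (vfun P p x z) + norm (hdrift p x z) + norm (gdrift p x z) + norm (cm P p m x z)"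
      unfolding Zinc_eq by (smt (verit) norm_triangle_ineq norm_triangle_ineq4)
    then show ?thesis
      using norm_Vset[OF that] Bv[of k "z + (1 / real m) *\<^sub>R u"] Bv[of x z]
        norm_hdrift_le_1[of x z] norm_gdrift_le_1[of x z] C[of m x z]
      by linarith
  qed
  then show thesis by (rule that)
qed

end

section \<open>The martingale property\<close>

lemma space_natfilt [simp]: "space (natfilt M \<xi> R n) = space M"
  unfolding natfilt_def by (simp add: space_measure_of_conv)

lemma sets_natfilt: "sets (natfilt M \<xi> R n) = sigma_sets (space M)
     ((\<Union>i\<in>{..n}. {\<xi> i -` A \<inter> space M | A. True}) \<union> (\<Union>i\<in>{..n}. {R i -` A \<inter> space M | A. True}))"
  unfolding natfilt_def by (rule sets_measure_of) auto

lemma subalgebra_natfilt: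
  assumes "\<And>i. \<xi> i \<in> M \<rightarrow>\<^sub>M count_space UNIV" "\<And>i. R i \<in> M \<rightarrow>\<^sub>M count_space UNIV"
  shows "subalgebra M (natfilt M \<xi> R n)"
  unfolding subalgebra_def sets_natfilt
  by (auto intro!: sets.sigma_sets_subset measurable_sets[OF assms(1)] measurable_sets[OF assms(2)])

lemma measurable_natfilt:
  "\<xi> n \<in> natfilt M \<xi> R n \<rightarrow>\<^sub>M count_space UNIV" "R n \<in> natfilt M \<xi> R n \<rightarrow>\<^sub>M count_space UNIV"
  by (intro measurableI; simp add: sets_natfilt; blast intro: sigma_sets.Basic)+

lemma borel_measurable_count_space_pair:
  fixes X :: "'a \<Rightarrow> 'e::finite"
  assumes X: "X \<in> N \<rightarrow>\<^sub>M count_space UNIV" and Y: "Y \<in> N \<rightarrow>\<^sub>M count_space UNIV"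
  shows "(\<lambda>\<omega>. f (X \<omega>) (Y \<omega>)) \<in> borel_measurable N"
proof (rule measurable_compose_countable'[OF _ X])
  show "(\<lambda>\<omega>. f i (Y \<omega>)) \<in> borel_measurable N" for i
    using measurable_compose[OF Y, of "f i" borel] by simp
qed simp

lemma borel_measurable_count_space:
  "Y \<in> N \<rightarrow>\<^sub>M count_space UNIV \<Longrightarrow> Y \<in> borel_measurable N"
  using measurable_compose[of Y N "count_space UNIV" "\<lambda>y. y" borel] by simp

lemma sets_step_event:
  fixes Y Y' :: "'a \<Rightarrow> 'b::{second_countable_topology, real_normed_vector}"
  assumes X': "X' \<in> M \<rightarrow>\<^sub>M count_space UNIV"
    and Y: "Y \<in> M \<rightarrow>\<^sub>M count_space UNIV" and Y': "Y' \<in> M \<rightarrow>\<^sub>M count_space UNIV"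
  shows "{\<omega>\<in>space M. X' \<omega> = k \<and> Y' \<omega> = Y \<omega> + u} \<in> sets M"
proof -
  have "(\<lambda>\<omega>. Y' \<omega> - Y \<omega>) \<in> borel_measurable M"
    by (intro borel_measurable_diff borel_measurable_count_space[OF Y'] borel_measurable_count_space[OF Y])
  then have "(\<lambda>\<omega>. Y' \<omega> - Y \<omega>) -` {u} \<inter> space M \<in> sets M"
    by (rule measurable_sets) simp
  moreover have "X' -` {k} \<inter> space M \<in> sets M" by (rule measurable_sets[OF X']) simp
  moreover have "{\<omega>\<in>space M. X' \<omega> = k \<and> Y' \<omega> = Y \<omega> + u}
      = (X' -` {k} \<inter> space M) \<inter> ((\<lambda>\<omega>. Y' \<omega> - Y \<omega>) -` {u} \<inter> space M)"
    by (auto simp: algebra_simps)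
  ultimately show ?thesis by simp
qed

lemma (in prob_space) AE_in_Union_of_cond_prob:
  assumes sub: "subalgebra M F" and I: "finite I"
    and A: "\<And>i. i \<in> I \<Longrightarrow> A i \<in> sets M" and disj: "disjoint_family_on A I"
    and Q: "\<And>i. i \<in> I \<Longrightarrow> AE \<omega> in M. real_cond_exp M F (indicator (A i)) \<omega> = Q i \<omega>"
    and Q_sum: "\<And>\<omega>. (\<Sum>i\<in>I. Q i \<omega>) = 1"
  shows "AE \<omega> in M. \<omega> \<in> (\<Union>i\<in>I. A i)"
proof (rule AE_prob_1)
  interpret sigma_finite_subalgebra M F
    using sub by (intro finite_measure_subalgebra_is_sigma_finite finite_measure_subalgebra.intro
        finite_measure_subalgebra_axioms.intro finite_measure_axioms)
  have ind_int: "integrable M (indicator (A i) :: 'a \<Rightarrow> real)" if "i \<in> I" for i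
    using A[OF that] by (intro integrable_real_indicator) (auto simp: less_top[symmetric])
  have "AE \<omega> in M. \<forall>i\<in>I. real_cond_exp M F (indicator (A i)) \<omega> = Q i \<omega>"
    using Q by (intro AE_finite_allI[OF I])
  then have cond_prob_sum: "AE \<omega> in M. (\<Sum>i\<in>I. real_cond_exp M F (indicator (A i)) \<omega>) = 1"
    by eventually_elim (simp add: Q_sum)
  have "prob (\<Union>i\<in>I. A i) = (\<Sum>i\<in>I. prob (A i))"
    using A disj by (intro measure_finite_Union[OF I]) (auto simp: emeasure_finite)
  also have "\<dots> = (\<Sum>i\<in>I. integral\<^sup>L M (indicator (A i)))"
    using A by (simp add: Int_absorb2 sets.sets_into_space)
  also have "\<dots> = (\<Sum>i\<in>I. integral\<^sup>L M (real_cond_exp M F (indicator (A i))))"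
    using ind_int by (simp add: real_cond_exp_int(2))
  also have "\<dots> = integral\<^sup>L M (\<lambda>\<omega>. \<Sum>i\<in>I. real_cond_exp M F (indicator (A i)) \<omega>)"
    using ind_int by (simp add: real_cond_exp_int(1))
  also have "\<dots> = integral\<^sup>L M (\<lambda>_. 1)"
    using cond_prob_sum by (intro integral_cong_AE borel_measurable_sum measurable_from_subalg[OF sub]) auto
  finally show "prob (\<Union>i\<in>I. A i) = 1" by (simp add: prob_space)
qed

lemma (in prob_space) real_cond_exp_finite_partition:
  assumes sub: "subalgebra M F" and I: "finite I"
    and A: "\<And>i. i \<in> I \<Longrightarrow> A i \<in> sets M" and disj: "disjoint_family_on A I"
    and Q: "\<And>i. i \<in> I \<Longrightarrow> AE \<omega> in M. real_cond_exp M F (indicator (A i)) \<omega> = Q i \<omega>"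
    and Q_sum: "\<And>\<omega>. (\<Sum>i\<in>I. Q i \<omega>) = 1"
    and W: "\<And>i. i \<in> I \<Longrightarrow> W i \<in> borel_measurable F" and W_bounded: "\<And>i \<omega>. i \<in> I \<Longrightarrow> \<bar>W i \<omega>\<bar> \<le> B"
    and f: "f \<in> borel_measurable M" and f_eq: "\<And>i \<omega>. i \<in> I \<Longrightarrow> \<omega> \<in> A i \<Longrightarrow> f \<omega> = W i \<omega>"
  shows "AE \<omega> in M. real_cond_exp M F f \<omega> = (\<Sum>i\<in>I. W i \<omega> * Q i \<omega>)"
proof -
  interpret sigma_finite_subalgebra M F
    using sub by (intro finite_measure_subalgebra_is_sigma_finite finite_measure_subalgebra.intro
        finite_measure_subalgebra_axioms.intro finite_measure_axioms)
  \<comment> \<open>extended by zero outside \<open>I\<close>, since \<open>real_cond_exp_sum\<close> wants integrability for every index\<close>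
  define g where "g i = (\<lambda>\<omega>. if i \<in> I then W i \<omega> * indicator (A i) \<omega> else 0)" for i
  have g_int: "integrable M (g i)" for i
  proof (cases "i \<in> I")
    case True
    have "W i \<in> borel_measurable M" using measurable_from_subalg[OF sub W[OF True]] .
    with True A show ?thesis unfolding g_def
      by (intro integrable_const_bound[where B = B])
        (auto simp: indicator_def W_bounded intro: order_trans[OF abs_ge_zero W_bounded])
  qed (simp add: g_def)
  have "AE \<omega> in M. \<omega> \<in> (\<Union>i\<in>I. A i)"
    by (rule AE_in_Union_of_cond_prob[OF sub I]) (fact A disj Q Q_sum)+
  then have "AE \<omega> in M. f \<omega> = (\<Sum>i\<in>I. g i \<omega>)"
  proof eventually_elim
    case (elim \<omega>)
    then obtain j where j: "j \<in> I" "\<omega> \<in> A j" by blast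
    have "\<omega> \<notin> A i" if "i \<in> I" "i \<noteq> j" for i
      using disj j that unfolding disjoint_family_on_def by blast
    then have "(\<Sum>i\<in>I. g i \<omega>) = g j \<omega>"
      using I j by (intro sum.remove[THEN trans]) (auto simp: g_def intro!: sum.neutral)
    with j f_eq show ?case by (simp add: g_def)
  qed
  then have "AE \<omega> in M. real_cond_exp M F f \<omega> = real_cond_exp M F (\<lambda>\<omega>. \<Sum>i\<in>I. g i \<omega>) \<omega>"
    using g_int by (intro real_cond_exp_cong f borel_measurable_sum) auto
  moreover have "AE \<omega> in M. real_cond_exp M F (\<lambda>\<omega>. \<Sum>i\<in>I. g i \<omega>) \<omega> = (\<Sum>i\<in>I. real_cond_exp M F (g i) \<omega>)"
    using g_int by (rule real_cond_exp_sum)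
  moreover have "AE \<omega> in M. \<forall>i\<in>I. real_cond_exp M F (g i) \<omega> = W i \<omega> * Q i \<omega>"
  proof (rule AE_finite_allI[OF I])
    fix i assume i: "i \<in> I"
    have "g i = (\<lambda>\<omega>. W i \<omega> * indicator (A i) \<omega>)" using i by (simp add: g_def)
    moreover have "AE \<omega> in M. real_cond_exp M F (\<lambda>\<omega>. W i \<omega> * indicator (A i) \<omega>) \<omega>
        = W i \<omega> * real_cond_exp M F (indicator (A i)) \<omega>"
      using g_int[of i] i A W by (intro real_cond_exp_mult) (auto simp: g_def)
    ultimately have "AE \<omega> in M. real_cond_exp M F (g i) \<omega> = W i \<omega> * real_cond_exp M F (indicator (A i)) \<omega>"
      by simp
    with Q[OF i] show "AE \<omega> in M. real_cond_exp M F (g i) \<omega> = W i \<omega> * Q i \<omega>"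
      by eventually_elim simp
  qed
  ultimately show ?thesis by eventually_elim simp
qed

lemma reflected_chain_cond_exp_step:
  fixes P :: "'e::finite \<Rightarrow> 'e \<Rightarrow> real" and M :: "'a measure"
    and \<xi> :: "nat \<Rightarrow> 'a \<Rightarrow> 'e" and R :: "nat \<Rightarrow> 'a \<Rightarrow> real^'d"
  assumes stoch: "stochastic P" and p_nonneg: "\<And>k y u. u \<in> Vset \<Longrightarrow> 0 \<le> p k y u"
    and p_sum: "\<And>k y. (\<Sum>u\<in>Vset. p k y u) = 1"
    and chain: "reflected_chain P p m M \<xi> R"
    and f_measurable: "(\<lambda>\<omega>. f (\<xi> n \<omega>) (R n \<omega>) (\<xi> (Suc n) \<omega>) (R (Suc n) \<omega>)) \<in> borel_measurable M"
    and f_bounded: "\<And>x y k u. u \<in> Vset \<Longrightarrow> \<bar>f x y k (y + u)\<bar> \<le> B"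
  shows "AE \<omega> in M. real_cond_exp M (natfilt M \<xi> R n)
      (\<lambda>\<omega>. f (\<xi> n \<omega>) (R n \<omega>) (\<xi> (Suc n) \<omega>) (R (Suc n) \<omega>)) \<omega>
    = (\<Sum>k\<in>UNIV. \<Sum>u\<in>Vset. P (\<xi> n \<omega>) k * qref p (\<xi> n \<omega>) ((1 / real m) *\<^sub>R R n \<omega>) u
         * f (\<xi> n \<omega>) (R n \<omega>) k (R n \<omega> + u))"
proof -
  have ps: "prob_space M" and \<xi>: "\<And>i. \<xi> i \<in> M \<rightarrow>\<^sub>M count_space UNIV"
    and R: "\<And>i. R i \<in> M \<rightarrow>\<^sub>M count_space UNIV"
    and step: "\<And>k u. u \<in> Vset \<Longrightarrow> AE \<omega> in M. real_cond_exp M (natfilt M \<xi> R n)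
        (indicator {\<omega>\<in>space M. \<xi> (Suc n) \<omega> = k \<and> R (Suc n) \<omega> = R n \<omega> + u}) \<omega>
      = P (\<xi> n \<omega>) k * qref p (\<xi> n \<omega>) ((1 / real m) *\<^sub>R R n \<omega>) u"
    using chain unfolding reflected_chain_def by blast+
  define I where "I = (UNIV :: 'e set) \<times> (Vset :: (real^'d) set)"
  define A where "A i = {\<omega>\<in>space M. \<xi> (Suc n) \<omega> = fst i \<and> R (Suc n) \<omega> = R n \<omega> + snd i}"
    for i :: "'e \<times> (real^'d)"
  define Q where "Q i \<omega> = P (\<xi> n \<omega>) (fst i) * qref p (\<xi> n \<omega>) ((1 / real m) *\<^sub>R R n \<omega>) (snd i)"
    for i :: "'e \<times> (real^'d)" and \<omega>
  define W where "W i \<omega> = f (\<xi> n \<omega>) (R n \<omega>) (fst i) (R n \<omega> + snd i)" for i :: "'e \<times> (real^'d)" and \<omega>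
  have A_sets: "A i \<in> sets M" for i
    unfolding A_def by (intro sets_step_event \<xi> R)
  have Q_sum: "(\<Sum>i\<in>I. Q i \<omega>) = 1" for \<omega>
  proof -
    have "(\<Sum>i\<in>I. Q i \<omega>) = (\<Sum>k\<in>UNIV. P (\<xi> n \<omega>) k * (\<Sum>u\<in>Vset. qref p (\<xi> n \<omega>) ((1 / real m) *\<^sub>R R n \<omega>) u))"
      unfolding I_def Q_def by (simp add: sum.cartesian_product split_def sum_distrib_left)
    also have "\<dots> = 1" using stoch by (simp add: qref_sum p_sum stochastic_def)
    finally show ?thesis .
  qed
  have "AE \<omega> in M. real_cond_exp M (natfilt M \<xi> R n)
      (\<lambda>\<omega>. f (\<xi> n \<omega>) (R n \<omega>) (\<xi> (Suc n) \<omega>) (R (Suc n) \<omega>)) \<omega> = (\<Sum>i\<in>I. W i \<omega> * Q i \<omega>)"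
  proof (rule prob_space.real_cond_exp_finite_partition[OF ps subalgebra_natfilt[OF \<xi> R]])
    show "disjoint_family_on A I" unfolding disjoint_family_on_def A_def by auto
    show "AE \<omega> in M. real_cond_exp M (natfilt M \<xi> R n) (indicator (A i)) \<omega> = Q i \<omega>" if "i \<in> I" for i
      using step[of "snd i" "fst i"] that unfolding I_def A_def Q_def by auto
    show "W i \<in> borel_measurable (natfilt M \<xi> R n)" for i
      unfolding W_def by (intro borel_measurable_count_space_pair measurable_natfilt)
    show "\<bar>W i \<omega>\<bar> \<le> B" if "i \<in> I" for i \<omega>
      using f_bounded that unfolding I_def W_def by auto
    show "f (\<xi> n \<omega>) (R n \<omega>) (\<xi> (Suc n) \<omega>) (R (Suc n) \<omega>) = W i \<omega>" if "\<omega> \<in> A i" for i \<omega>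
      using that unfolding A_def W_def by auto
  qed (use A_sets Q_sum f_measurable in \<open>auto simp: I_def\<close>)
  then show ?thesis
    unfolding I_def W_def Q_def by (simp add: sum.cartesian_product split_def mult.commute)
qed

lemma borel_measurable_Zinc:
  fixes \<xi> \<xi>' :: "'a \<Rightarrow> 'e::finite"
  assumes "\<xi> \<in> N \<rightarrow>\<^sub>M count_space UNIV" "R \<in> N \<rightarrow>\<^sub>M count_space UNIV"
    and "\<xi>' \<in> N \<rightarrow>\<^sub>M count_space UNIV" "R' \<in> N \<rightarrow>\<^sub>M count_space UNIV"
  shows "(\<lambda>\<omega>. Zinc P p m (\<xi> \<omega>) (R \<omega>) (\<xi>' \<omega>) (R' \<omega>) $ l) \<in> borel_measurable N"
proof -
  define after where "after x r = (r + vfun P p x ((1 / real m) *\<^sub>R r)) $ l" for x r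
  define before where "before x r = (r + vfun P p x ((1 / real m) *\<^sub>R r)
      + (hdrift p x ((1 / real m) *\<^sub>R r) - gdrift p x ((1 / real m) *\<^sub>R r)) + cm P p m x ((1 / real m) *\<^sub>R r)) $ l"
    for x r
  have "(\<lambda>\<omega>. Zinc P p m (\<xi> \<omega>) (R \<omega>) (\<xi>' \<omega>) (R' \<omega>) $ l) = (\<lambda>\<omega>. after (\<xi>' \<omega>) (R' \<omega>) - before (\<xi> \<omega>) (R \<omega>))"
    unfolding Zinc_def after_def before_def by simp
  also have "\<dots> \<in> borel_measurable N"
    using assms by (intro borel_measurable_diff borel_measurable_count_space_pair)
  finally show ?thesis .
qed

context modulated_walk
begin

lemma Zinc_martingale_increment:
  assumes chain: "reflected_chain P p m M \<xi> R"
  shows "AE \<omega> in M. real_cond_exp M (natfilt M \<xi> R n)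
    (\<lambda>\<omega>. Zinc P p m (\<xi> n \<omega>) (R n \<omega>) (\<xi> (Suc n) \<omega>) (R (Suc n) \<omega>) $ l) \<omega> = 0"
proof -
  obtain B where B: "\<And>x y k u. u \<in> Vset \<Longrightarrow> norm (Zinc P p m x y k (y + u)) \<le> B"
    using Zinc_bounded by metis
  have "\<bar>Zinc P p m x y k (y + u) $ l\<bar> \<le> B" if "u \<in> Vset" for x y k u
    using order_trans[OF component_le_norm_cart B[OF that]] .
  then have "AE \<omega> in M. real_cond_exp M (natfilt M \<xi> R n)
      (\<lambda>\<omega>. Zinc P p m (\<xi> n \<omega>) (R n \<omega>) (\<xi> (Suc n) \<omega>) (R (Suc n) \<omega>) $ l) \<omega>
    = (\<Sum>k\<in>UNIV. \<Sum>u\<in>Vset. P (\<xi> n \<omega>) k * qref p (\<xi> n \<omega>) ((1 / real m) *\<^sub>R R n \<omega>) u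
         * (Zinc P p m (\<xi> n \<omega>) (R n \<omega>) k (R n \<omega> + u) $ l))"
    using chain unfolding reflected_chain_def
    by (intro reflected_chain_cond_exp_step[OF stoch _ p_sum chain] borel_measurable_Zinc)
      (auto simp: p_nonneg)
  then show ?thesis
  proof eventually_elim
    case (elim \<omega>)
    have "(\<Sum>k\<in>UNIV. \<Sum>u\<in>Vset. (P (\<xi> n \<omega>) k * qref p (\<xi> n \<omega>) ((1 / real m) *\<^sub>R R n \<omega>) u)
        *\<^sub>R Zinc P p m (\<xi> n \<omega>) (R n \<omega>) k (R n \<omega> + u)) $ l = 0"
      by (simp only: Zinc_mean_zero) simp
    with elim show ?case by (simp add: mult_ac)
  qed
qed

end

theorem proposition5p1:
  fixes P :: "'e::finite \<Rightarrow> 'e \<Rightarrow> real"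
    and \<mu> :: "'e \<Rightarrow> real"
    and p :: "'e \<Rightarrow> real^'d \<Rightarrow> real^'d \<Rightarrow> real"
  assumes stoch: "stochastic P"
    and irr: "irreducible_mat P"
    and aper: "aperiodic_mat P"
    and inv: "invariant_prob P \<mu>"
    and p_nonneg: "\<And>k y u. u \<in> Vset \<Longrightarrow> 0 \<le> p k y u"
    and p_sum: "\<And>k y. (\<Sum>u\<in>Vset. p k y u) = 1"
    and p_C2: "\<And>k u. u \<in> Vset \<Longrightarrow> C2_bounded (\<lambda>y. p k y u)"
    and centered: "\<And>y. (\<Sum>k\<in>UNIV. \<mu> k *\<^sub>R gdrift p k y) = 0"
  shows "(\<forall>(m::nat) (M::'a measure) \<xi> R. m \<ge> 1 \<and> reflected_chain P p m M \<xi> R \<longrightarrow>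
           (\<forall>n l. AE \<omega> in M.
              real_cond_exp M (natfilt M \<xi> R n)
                (\<lambda>\<omega>. Zinc P p m (\<xi> n \<omega>) (R n \<omega>) (\<xi> (Suc n) \<omega>) (R (Suc n) \<omega>) $ l) \<omega> = 0))
         \<and> (\<exists>C. \<forall>m::nat. m \<ge> 1 \<longrightarrow> (\<forall>i y. y \<in> unit_box \<longrightarrow> norm (cm P p m i y) \<le> C / real m))"
proof -
  interpret modulated_walk P \<mu> p
    using stoch irr aper inv p_nonneg p_sum p_C2 centered by (rule modulated_walk.intro)
  obtain C where "\<And>m i y. norm (cm P p m i y) \<le> C / real m"
    using cm_bound by metis
  then show ?thesis
    using Zinc_martingale_increment by blast
qed

end
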